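(* Let $\mathcal{R}$ be a left-connected rewriting system over a signature $\Sigma$, let $L_i,L_j$ be left-hand sides of rules of $\mathcal{R}$, and let $S_{ij\gamma}$ (with $\epsilon_{ij\gamma}\colon L_i+L_j\to S_{ij\gamma}$) be a hyperedge gluing and $S_{ij\gamma'}$ (with $\epsilon_{ij\gamma'}\colon S_{ij\gamma}\to S_{ij\gamma'}$) a subsequent node gluing, as described below, such that $S_{ij\gamma'}$ yields a critical pair. Then for every left-hand side $L$ of a rule of $\mathcal{R}$ and every convex match $m\colon L\to S_{ij\gamma}$ (into the ma-cospan $in(S_{ij\gamma})\to S_{ij\gamma}\leftarrow out(S_{ij\gamma})$), the composite $m;\epsilon_{ij\gamma'}\colon L\to S_{ij\gamma'}$ is a convex match (into the ma-cospan $in(S_{ij\gamma'})\to S_{ij\gamma'}\leftarrow out(S_{ij\gamma'})$).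
   Context: A signature $\Sigma$ is a set of triples $(x,n,m)$ (label, arity, coarity). A $\Sigma$-hypergraph $G=(V,E,s,t,l)$ has finite sets $V$ (nodes), $E$ (hyperedges), maps $s,t\colon E\to V^*$ (lists of sources/targets) and a labelling $l\colon E\to\Sigma$ sending a hyperedge with $n$ sources and $m$ targets to some $(x,n,m)$. Morphisms preserve sources, targets and labels; they form the category $\mathbf{Hyp}_\Sigma$, where colimits are computed componentwise and monos/epis are injective/surjective on nodes and hyperedges. Composition is written $f;g$; $\iota_1,\iota_2$ are coprojections. A hypergraph is discrete if it has no hyperedges. A path is a list of hyperedges $[e_1,\dots,e_n]$ with some target of $e_k$ equal to a source of $e_{k+1}$ for each $k$; it goes from $v$ to $v'$ if $v$ is a source of $e_1$ and $v'$ a target of $e_n$; a cycle is a path with some source of $e_1$ a target of $e_n$. In-degree (out-degree) of a node $v$: number of pairs $(e,i)$ with $v$ the $i$-th target (source) of $e$; $in(H)$, $out(H)$: nodes of in-degree $0$, out-degree $0$. $H$ is ma (monogamous acyclic) if it has no cycle and all in- and out-degrees are $\le 1$. A cospan $I\to H\leftarrow O$ with $I,O$ discrete is an ma-cospan if $H$ is ma and the legs are mono with images $in(H)$ and $out(H)$. $H$ is strongly connected if for all $x\in in(H)$, $y\in out(H)$ there is a path from $x$ to $y$. A left-connected rule is a span $L\xleftarrow{[i_L,o_L]}K=I+O\xrightarrow{[i_R,o_R]}R$ with $I,O$ discrete, $I\to L\leftarrow O$, $I\to R\leftarrow O$ ma-cospans, $[i_L,o_L]$ mono, $L$ strongly connected;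 a left-connected rewriting system is a finite set of such rules. A convex match is a mono $m\colon L\to G$ such that for any nodes $v,v'$ of $m(L)$ and any path in $G$ from $v$ to $v'$, all hyperedges of the path lie in $m(L)$; for left-connected systems it is known that every mono match of a left-hand side is convex. Derivations between ma-cospans are given by a rule, a convex match and a double pushout diagram commuting with the interface. A pre-critical pair is a pair of derivations from a common ma-cospan $n\to S\leftarrow m$ with matches $m_1\colon L_i\to S$, $m_2\colon L_j\to S$ such that $[m_1,m_2]$ is epi; it is parallel if $m_1$ factors through the pushout complement $C_2\to S$ of the second derivation and $m_2$ through the pushout complement $C_1\to S$ of the first; critical if not parallel. Hyperedge gluing: let $M$ be a nonempty set of pairs $(e,e')$, $e$ a hyperedge of $L_i$, $e'$ of $L_j$, with equal labels, no hyperedge in two pairs; $\gamma$ has hyperedges $M$ and nodes the pairs $(v,v')$ that are $k$-th sources (or $k$-th targets) of $e,e'$ for some $(e,e')\in M$ and $k$, with projections $p_1^\gamma\colon\gamma\to L_i$, $p_2^\gamma\colon\gamma\to L_j$; $\epsilon_{ij\gamma}\colon L_i+L_j\to S_{ij\gamma}$ is the coequaliser of $p_1^\gamma;\iota_1$ and $p_2^\gamma;\iota_2$. Node gluing: with $I_1=in(S_{ij\gamma})\cap\epsilon_{ij\gamma}(\iota_1(in(L_i)))$, $I_2=in(S_{ij\gamma})\cap\epsilon_{ij\gamma}(\iota_2(in(L_j)))$, $O_1=out(S_{ij\gamma})\cap\epsilon_{ij\gamma}(\iota_1(out(L_i)))$, $O_2=out(S_{ij\gamma})\cap\epsilon_{ij\gamma}(\iota_2(out(L_j)))$,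 let $N$ be a set of pairs in $I_1\times O_2$, or in $I_2\times O_1$, with no element in two pairs; $\gamma'$ is the discrete hypergraph with nodes $N$ and projections $p_1^{\gamma'},p_2^{\gamma'}\colon\gamma'\to S_{ij\gamma}$; $\epsilon_{ij\gamma'}\colon S_{ij\gamma}\to S_{ij\gamma'}$ is their coequaliser. $S_{ij\gamma'}$ yields a critical pair if the matches $\iota_k;\epsilon_{ij\gamma};\epsilon_{ij\gamma'}$ ($k=1,2$) are mono, $in(S_{ij\gamma'})\xrightarrow{\subseteq}S_{ij\gamma'}\xleftarrow{\subseteq}out(S_{ij\gamma'})$ is an ma-cospan, and the derivations from it with these matches form a critical pair. *)

theory Defs
  imports Main
begin

record ('v,'e,'l) hyp =
  nodes :: "'v set"
  edges :: "'e set"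
  src :: "'e \<Rightarrow> 'v list"
  tgt :: "'e \<Rightarrow> 'v list"
  lab :: "'e \<Rightarrow> 'l"

definition wf_hyp :: "('l \<times> nat \<times> nat) set \<Rightarrow> ('v,'e,'l) hyp \<Rightarrow> bool" where
  "wf_hyp Sig G \<longleftrightarrow> finite (nodes G) \<and> finite (edges G) \<and>
     (\<forall>e\<in>edges G. set (src G e) \<subseteq> nodes G \<and> set (tgt G e) \<subseteq> nodes G \<and>
        (lab G e, length (src G e), length (tgt G e)) \<in> Sig)"

text \<open>Morphisms: a node map and a hyperedge map (only relevant on carriers).\<close>

type_synonym ('v,'e,'w,'f) morph = "('v \<Rightarrow> 'w) \<times> ('e \<Rightarrow> 'f)"

definition hom :: "('v,'e,'l) hyp \<Rightarrow> ('w,'f,'l) hyp \<Rightarrow> ('v,'e,'w,'f) morph \<Rightarrow> bool" where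
  "hom G H f \<longleftrightarrow> (\<forall>v\<in>nodes G. fst f v \<in> nodes H) \<and>
     (\<forall>e\<in>edges G. snd f e \<in> edges H \<and> src H (snd f e) = map (fst f) (src G e) \<and>
        tgt H (snd f e) = map (fst f) (tgt G e) \<and> lab H (snd f e) = lab G e)"

definition mcomp :: "('v,'e,'w,'f) morph \<Rightarrow> ('w,'f,'x,'y) morph \<Rightarrow> ('v,'e,'x,'y) morph" where
  "mcomp f g = (fst g \<circ> fst f, snd g \<circ> snd f)"

definition mono :: "('v,'e,'l) hyp \<Rightarrow> ('w,'f,'l) hyp \<Rightarrow> ('v,'e,'w,'f) morph \<Rightarrow> bool" where
  "mono G H f \<longleftrightarrow> hom G H f \<and> inj_on (fst f) (nodes G) \<and> inj_on (snd f) (edges G)"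

definition disc :: "'a set \<Rightarrow> ('a,'e,'l) hyp" where
  "disc N = \<lparr>nodes = N, edges = {}, src = (\<lambda>_. []), tgt = (\<lambda>_. []), lab = (\<lambda>_. undefined)\<rparr>"

definition po_rel :: "'a set \<Rightarrow> ('a \<Rightarrow> 'b) \<Rightarrow> ('a \<Rightarrow> 'c) \<Rightarrow> ('b + 'c) rel" where
  "po_rel A f g = {(Inl (f a), Inr (g a)) | a. a \<in> A}"

definition set_pushout :: "'a set \<Rightarrow> 'b set \<Rightarrow> 'c set \<Rightarrow> 'd set \<Rightarrow>
    ('a \<Rightarrow> 'b) \<Rightarrow> ('a \<Rightarrow> 'c) \<Rightarrow> ('b \<Rightarrow> 'd) \<Rightarrow> ('c \<Rightarrow> 'd) \<Rightarrow> bool" where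
  "set_pushout A B C D f g f' g' \<longleftrightarrow>
     (\<forall>a\<in>A. f' (f a) = g' (g a)) \<and> f' ` B \<union> g' ` C = D \<and>
     (\<forall>x\<in>B <+> C. \<forall>y\<in>B <+> C. (case_sum f' g' x = case_sum f' g' y) \<longleftrightarrow>
        (x, y) \<in> (po_rel A f g \<union> (po_rel A f g)\<inverse>)\<^sup>*)"

definition hyp_pushout :: "('a,'ae,'l) hyp \<Rightarrow> ('b,'be,'l) hyp \<Rightarrow> ('c,'ce,'l) hyp \<Rightarrow> ('d,'de,'l) hyp \<Rightarrow>
    ('a,'ae,'b,'be) morph \<Rightarrow> ('a,'ae,'c,'ce) morph \<Rightarrow> ('b,'be,'d,'de) morph \<Rightarrow> ('c,'ce,'d,'de) morph \<Rightarrow> bool" where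
  "hyp_pushout A B C D f g f' g' \<longleftrightarrow> hom A B f \<and> hom A C g \<and> hom B D f' \<and> hom C D g' \<and>
     set_pushout (nodes A) (nodes B) (nodes C) (nodes D) (fst f) (fst g) (fst f') (fst g') \<and>
     set_pushout (edges A) (edges B) (edges C) (edges D) (snd f) (snd g) (snd f') (snd g')"

definition set_coeq :: "'a set \<Rightarrow> 'b set \<Rightarrow> 'd set \<Rightarrow> ('a \<Rightarrow> 'b) \<Rightarrow> ('a \<Rightarrow> 'b) \<Rightarrow> ('b \<Rightarrow> 'd) \<Rightarrow> bool" where
  "set_coeq A B D f g q \<longleftrightarrow>
     (\<forall>a\<in>A. q (f a) = q (g a)) \<and> q ` B = D \<and>
     (\<forall>x\<in>B. \<forall>y\<in>B. q x = q y \<longleftrightarrow>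
        (x, y) \<in> ({(f a, g a) | a. a \<in> A} \<union> {(f a, g a) | a. a \<in> A}\<inverse>)\<^sup>*)"

definition hyp_coeq :: "('a,'ae,'l) hyp \<Rightarrow> ('b,'be,'l) hyp \<Rightarrow> ('d,'de,'l) hyp \<Rightarrow>
    ('a,'ae,'b,'be) morph \<Rightarrow> ('a,'ae,'b,'be) morph \<Rightarrow> ('b,'be,'d,'de) morph \<Rightarrow> bool" where
  "hyp_coeq A B D f g q \<longleftrightarrow> hom A B f \<and> hom A B g \<and> hom B D q \<and>
     set_coeq (nodes A) (nodes B) (nodes D) (fst f) (fst g) (fst q) \<and>
     set_coeq (edges A) (edges B) (edges D) (snd f) (snd g) (snd q)"

definition is_path :: "('v,'e,'l) hyp \<Rightarrow> 'e list \<Rightarrow> bool" where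
  "is_path G p \<longleftrightarrow> p \<noteq> [] \<and> set p \<subseteq> edges G \<and>
     (\<forall>k. Suc k < length p \<longrightarrow> set (tgt G (p ! k)) \<inter> set (src G (p ! Suc k)) \<noteq> {})"

definition path_from_to :: "('v,'e,'l) hyp \<Rightarrow> 'e list \<Rightarrow> 'v \<Rightarrow> 'v \<Rightarrow> bool" where
  "path_from_to G p v v' \<longleftrightarrow> is_path G p \<and> v \<in> set (src G (hd p)) \<and> v' \<in> set (tgt G (last p))"

definition is_cycle :: "('v,'e,'l) hyp \<Rightarrow> 'e list \<Rightarrow> bool" where
  "is_cycle G p \<longleftrightarrow> is_path G p \<and> set (src G (hd p)) \<inter> set (tgt G (last p)) \<noteq> {}"

definition indeg :: "('v,'e,'l) hyp \<Rightarrow> 'v \<Rightarrow> nat" where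
  "indeg G v = card {(e, i). e \<in> edges G \<and> i < length (tgt G e) \<and> tgt G e ! i = v}"

definition outdeg :: "('v,'e,'l) hyp \<Rightarrow> 'v \<Rightarrow> nat" where
  "outdeg G v = card {(e, i). e \<in> edges G \<and> i < length (src G e) \<and> src G e ! i = v}"

definition inputs :: "('v,'e,'l) hyp \<Rightarrow> 'v set" where
  "inputs G = {v \<in> nodes G. indeg G v = 0}"

definition outputs :: "('v,'e,'l) hyp \<Rightarrow> 'v set" where
  "outputs G = {v \<in> nodes G. outdeg G v = 0}"

definition ma :: "('v,'e,'l) hyp \<Rightarrow> bool" where
  "ma G \<longleftrightarrow> (\<nexists>p. is_cycle G p) \<and> (\<forall>v\<in>nodes G. indeg G v \<le> 1 \<and> outdeg G v \<le> 1)"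

text \<open>Cospan I -> G <- O with I, O discrete (given by their node sets and the node maps of the legs).\<close>

definition ma_cospan :: "('v,'e,'l) hyp \<Rightarrow> 'i set \<Rightarrow> 'o set \<Rightarrow> ('i \<Rightarrow> 'v) \<Rightarrow> ('o \<Rightarrow> 'v) \<Rightarrow> bool" where
  "ma_cospan G Ii Oo fi fo \<longleftrightarrow> ma G \<and> inj_on fi Ii \<and> fi ` Ii = inputs G \<and> inj_on fo Oo \<and> fo ` Oo = outputs G"

definition strongly_connected :: "('v,'e,'l) hyp \<Rightarrow> bool" where
  "strongly_connected H \<longleftrightarrow> (\<forall>x\<in>inputs H. \<forall>y\<in>outputs H. \<exists>p. path_from_to H p x y)"

definition convex_match :: "('v,'e,'l) hyp \<Rightarrow> ('w,'f,'l) hyp \<Rightarrow> ('v,'e,'w,'f) morph \<Rightarrow> bool" where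
  "convex_match L G m \<longleftrightarrow> mono L G m \<and>
     (\<forall>v\<in>fst m ` nodes L. \<forall>v'\<in>fst m ` nodes L. \<forall>p. path_from_to G p v v' \<longrightarrow> set p \<subseteq> snd m ` edges L)"

text \<open>A rule L <- I+O -> R; the discrete interfaces I and O are given by node sets
  rin, rout, and the coproduct I+O is represented with Inl/Inr.\<close>

record ('v,'e,'l,'k) rule =
  lhs :: "('v,'e,'l) hyp"
  rhs :: "('v,'e,'l) hyp"
  rin :: "'k set"
  rout :: "'k set"
  iL :: "'k \<Rightarrow> 'v"
  oL :: "'k \<Rightarrow> 'v"
  iR :: "'k \<Rightarrow> 'v"
  oR :: "'k \<Rightarrow> 'v"

definition rule_K :: "('v,'e,'l,'k) rule \<Rightarrow> ('k + 'k, 'e, 'l) hyp" where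
  "rule_K r = disc (Inl ` rin r \<union> Inr ` rout r)"

definition rule_kL :: "('v,'e,'l,'k) rule \<Rightarrow> ('k + 'k, 'e, 'v, 'e) morph" where
  "rule_kL r = (case_sum (iL r) (oL r), id)"

definition rule_kR :: "('v,'e,'l,'k) rule \<Rightarrow> ('k + 'k, 'e, 'v, 'e) morph" where
  "rule_kR r = (case_sum (iR r) (oR r), id)"

definition left_connected_rule :: "('l \<times> nat \<times> nat) set \<Rightarrow> ('v,'e,'l,'k) rule \<Rightarrow> bool" where
  "left_connected_rule Sig r \<longleftrightarrow> wf_hyp Sig (lhs r) \<and> wf_hyp Sig (rhs r) \<and>
     finite (rin r) \<and> finite (rout r) \<and>
     ma_cospan (lhs r) (rin r) (rout r) (iL r) (oL r) \<and>
     ma_cospan (rhs r) (rin r) (rout r) (iR r) (oR r) \<and>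
     mono (rule_K r) (lhs r) (rule_kL r) \<and>
     strongly_connected (lhs r)"

definition left_connected_system :: "('l \<times> nat \<times> nat) set \<Rightarrow> ('v,'e,'l,'k) rule set \<Rightarrow> bool" where
  "left_connected_system Sig Rs \<longleftrightarrow> finite Rs \<and> (\<forall>r\<in>Rs. left_connected_rule Sig r)"

text \<open>Derivation from the ma-cospan I -fi-> G <-fo- O with rule r and convex match m:
  pushout squares K->L->G = K->C->G and K->R->H = K->C->H, an interface map
  I+O -> C (ji, jo) commuting with the legs of G, and result ma-cospan I -> H <- O.\<close>

definition derivation :: "('l \<times> nat \<times> nat) set \<Rightarrow> 'i set \<Rightarrow> 'o set \<Rightarrow> ('i \<Rightarrow> 'a) \<Rightarrow> ('o \<Rightarrow> 'a) \<Rightarrow>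
    ('a,'f,'l) hyp \<Rightarrow> ('v,'e,'l,'k) rule \<Rightarrow> ('v,'e,'a,'f) morph \<Rightarrow>
    ('c,'g,'l) hyp \<Rightarrow> ('k + 'k,'e,'c,'g) morph \<Rightarrow> ('c,'g,'a,'f) morph \<Rightarrow> ('c,'g,'h,'x) morph \<Rightarrow>
    ('h,'x,'l) hyp \<Rightarrow> ('v,'e,'h,'x) morph \<Rightarrow> ('i \<Rightarrow> 'c) \<Rightarrow> ('o \<Rightarrow> 'c) \<Rightarrow> bool" where
  "derivation Sig Ii Oo fi fo G r m C k c1 c2 H n ji jo \<longleftrightarrow>
     wf_hyp Sig G \<and> ma_cospan G Ii Oo fi fo \<and> convex_match (lhs r) G m \<and>
     wf_hyp Sig C \<and> wf_hyp Sig H \<and>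
     hyp_pushout (rule_K r) (lhs r) C G (rule_kL r) k m c1 \<and>
     hyp_pushout (rule_K r) (rhs r) C H (rule_kR r) k n c2 \<and>
     ji ` Ii \<subseteq> nodes C \<and> jo ` Oo \<subseteq> nodes C \<and>
     (\<forall>x\<in>Ii. fst c1 (ji x) = fi x) \<and> (\<forall>x\<in>Oo. fst c1 (jo x) = fo x) \<and>
     ma_cospan H Ii Oo (fst c2 \<circ> ji) (fst c2 \<circ> jo)"

definition factors_through :: "('v,'e,'l) hyp \<Rightarrow> ('v,'e,'a,'f) morph \<Rightarrow> ('c,'g,'l) hyp \<Rightarrow> ('c,'g,'a,'f) morph \<Rightarrow> bool" where
  "factors_through L m C c \<longleftrightarrow> (\<exists>h. hom L C h \<and>
     (\<forall>v\<in>nodes L. fst c (fst h v) = fst m v) \<and> (\<forall>e\<in>edges L. snd c (snd h e) = snd m e))"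

text \<open>The derivations from I -> G <- O with rule r1, match m1 and rule r2, match m2
  form a critical pair: a pre-critical pair ([m1,m2] epi) which is not parallel.
  Pushout complements / pushouts are represented in the types of G resp. G + R
  (they are unique up to isomorphism, so this is no restriction).\<close>

definition critical_pair :: "('l \<times> nat \<times> nat) set \<Rightarrow> 'i set \<Rightarrow> 'o set \<Rightarrow> ('i \<Rightarrow> 'a) \<Rightarrow> ('o \<Rightarrow> 'a) \<Rightarrow>
    ('a,'f,'l) hyp \<Rightarrow> ('v,'e,'l,'k) rule \<Rightarrow> ('v,'e,'a,'f) morph \<Rightarrow>
    ('v,'e,'l,'k) rule \<Rightarrow> ('v,'e,'a,'f) morph \<Rightarrow> bool" where
  "critical_pair Sig Ii Oo fi fo G r1 m1 r2 m2 \<longleftrightarrow>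
     (\<exists>(C1 :: ('a,'f,'l) hyp) k1 c11 c12 (H1 :: ('a + 'v, 'f + 'e, 'l) hyp) n1 ji1 jo1
       (C2 :: ('a,'f,'l) hyp) k2 c21 c22 (H2 :: ('a + 'v, 'f + 'e, 'l) hyp) n2 ji2 jo2.
        derivation Sig Ii Oo fi fo G r1 m1 C1 k1 c11 c12 H1 n1 ji1 jo1 \<and>
        derivation Sig Ii Oo fi fo G r2 m2 C2 k2 c21 c22 H2 n2 ji2 jo2 \<and>
        nodes G = fst m1 ` nodes (lhs r1) \<union> fst m2 ` nodes (lhs r2) \<and>
        edges G = snd m1 ` edges (lhs r1) \<union> snd m2 ` edges (lhs r2) \<and>
        \<not> (factors_through (lhs r1) m1 C2 c21 \<and> factors_through (lhs r2) m2 C1 c11))"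

definition hyperedge_gluing_set :: "('v,'e,'l) hyp \<Rightarrow> ('v,'e,'l) hyp \<Rightarrow> ('e \<times> 'e) set \<Rightarrow> bool" where
  "hyperedge_gluing_set Li Lj M \<longleftrightarrow> M \<noteq> {} \<and> M \<subseteq> edges Li \<times> edges Lj \<and>
     (\<forall>(e, e')\<in>M. lab Li e = lab Lj e' \<and> length (src Li e) = length (src Lj e') \<and>
                  length (tgt Li e) = length (tgt Lj e')) \<and>
     inj_on fst M \<and> inj_on snd M"

definition gamma :: "('v,'e,'l) hyp \<Rightarrow> ('v,'e,'l) hyp \<Rightarrow> ('e \<times> 'e) set \<Rightarrow> ('v \<times> 'v, 'e \<times> 'e, 'l) hyp" where
  "gamma Li Lj M = \<lparr>
     nodes = {(v, v'). \<exists>(e, e')\<in>M. \<exists>k.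
        (k < length (src Li e) \<and> k < length (src Lj e') \<and> src Li e ! k = v \<and> src Lj e' ! k = v') \<or>
        (k < length (tgt Li e) \<and> k < length (tgt Lj e') \<and> tgt Li e ! k = v \<and> tgt Lj e' ! k = v')},
     edges = M,
     src = (\<lambda>(e, e'). zip (src Li e) (src Lj e')),
     tgt = (\<lambda>(e, e'). zip (tgt Li e) (tgt Lj e')),
     lab = (\<lambda>(e, e'). lab Li e)\<rparr>"

text \<open>Node gluing data N for S with e1 : Li -> S, e2 : Lj -> S (the two components of epsilon).\<close>

definition node_gluing_set :: "('a,'f,'l) hyp \<Rightarrow> ('v,'e,'l) hyp \<Rightarrow> ('v,'e,'l) hyp \<Rightarrow>
    ('v,'e,'a,'f) morph \<Rightarrow> ('v,'e,'a,'f) morph \<Rightarrow> ('a \<times> 'a) set \<Rightarrow> bool" where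
  "node_gluing_set S Li Lj e1 e2 N \<longleftrightarrow>
     (let I1 = inputs S \<inter> fst e1 ` inputs Li; I2 = inputs S \<inter> fst e2 ` inputs Lj;
          O1 = outputs S \<inter> fst e1 ` outputs Li; O2 = outputs S \<inter> fst e2 ` outputs Lj
      in (N \<subseteq> I1 \<times> O2 \<or> N \<subseteq> I2 \<times> O1) \<and>
         (\<forall>p\<in>N. \<forall>q\<in>N. p \<noteq> q \<longrightarrow> {fst p, snd p} \<inter> {fst q, snd q} = {}))"

definition yields_critical_pair :: "('l \<times> nat \<times> nat) set \<Rightarrow> ('v,'e,'l,'k) rule \<Rightarrow> ('v,'e,'l,'k) rule \<Rightarrow>
    ('b,'g,'l) hyp \<Rightarrow> ('v,'e,'b,'g) morph \<Rightarrow> ('v,'e,'b,'g) morph \<Rightarrow> bool" where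
  "yields_critical_pair Sig ri rj S' m1 m2 \<longleftrightarrow>
     mono (lhs ri) S' m1 \<and> mono (lhs rj) S' m2 \<and>
     ma_cospan S' (inputs S') (outputs S') id id \<and>
     critical_pair Sig (inputs S') (outputs S') id id S' ri m1 rj m2"

end

theory Submission
  imports Defs
begin

(* Node gluing only identifies inputs of S with outputs of S, and never identifies hyperedges.
   If m;eps' identified two nodes of L, monogamy of S would make them an input and an output of L;
   strong connectivity gives a path between them in L whose image in S' is a cycle, contradicting
   acyclicity of S'. So m;eps' is mono. A mono from a strongly connected hypergraph into an ma
   hypergraph is convex: a path that leaves the image and comes back leaves it at (the image of) an
   output of L and re-enters at an input, by monogamy, and a path through L from that input to that
   output closes the detour into a cycle. *)

lemma is_path_Cons:
  "is_path G (e # p) \<longleftrightarrow>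
     e \<in> edges G \<and> (p = [] \<or> is_path G p \<and> set (tgt G e) \<inter> set (src G (hd p)) \<noteq> {})"
proof (cases p)
  case (Cons a p')
  have "(\<forall>k. Suc k < length (e # p) \<longrightarrow> set (tgt G ((e # p) ! k)) \<inter> set (src G ((e # p) ! Suc k)) \<noteq> {})
    \<longleftrightarrow> set (tgt G e) \<inter> set (src G a) \<noteq> {} \<and>
        (\<forall>k. Suc k < length p \<longrightarrow> set (tgt G (p ! k)) \<inter> set (src G (p ! Suc k)) \<noteq> {})"
    using Cons by (auto simp: All_less_Suc2 simp del: length_Cons)
  then show ?thesis using Cons by (auto simp: is_path_def)
qed (simp add: is_path_def)

lemma is_path_append:
  assumes "p \<noteq> []" "q \<noteq> []"
  shows "is_path G (p @ q) \<longleftrightarrow>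
     is_path G p \<and> is_path G q \<and> set (tgt G (last p)) \<inter> set (src G (hd q)) \<noteq> {}"
  using assms by (induction p) (auto simp: is_path_Cons)

lemma path_from_to_append:
  assumes "path_from_to G p x y" "path_from_to G q y z"
  shows "path_from_to G (p @ q) x z"
proof -
  have "p \<noteq> []" "q \<noteq> []" using assms by (auto simp: path_from_to_def is_path_def)
  then show ?thesis using assms by (auto simp: path_from_to_def is_path_append)
qed

lemma path_from_to_closed_is_cycle: "path_from_to G p x x \<Longrightarrow> is_cycle G p"
  by (auto simp: path_from_to_def is_cycle_def)

lemma ma_no_closed_path: "ma G \<Longrightarrow> \<not> path_from_to G p x x"
  by (meson ma_def path_from_to_closed_is_cycle)

lemma hom_is_path: "hom G H f \<Longrightarrow> is_path G p \<Longrightarrow> is_path H (map (snd f) p)"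
proof (induction p)
  case (Cons a p)
  then show ?case
    by (cases p) (auto simp: is_path_Cons hom_def)
qed (simp add: is_path_def)

lemma path_from_to_hom:
  assumes "hom G H f" "path_from_to G p x y"
  shows "path_from_to H (map (snd f) p) (fst f x) (fst f y)"
proof -
  have "p \<noteq> []" "hd p \<in> edges G" "last p \<in> edges G"
    using assms(2) by (auto simp: path_from_to_def is_path_def)
  then show ?thesis
    using assms hom_is_path[OF assms(1)] by (auto simp: path_from_to_def hom_def hd_map last_map)
qed

lemma path_from_to_appendE:
  assumes "path_from_to G (p @ q) x z" "p \<noteq> []" "q \<noteq> []"
  obtains y where "path_from_to G p x y" "path_from_to G q y z"
  using assms by (auto simp: path_from_to_def is_path_append)

lemma path_from_to_first_exit:
  assumes p: "path_from_to G p x y" and "x \<in> V" "\<not> set p \<subseteq> E"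
    and closed: "\<And>e. e \<in> E \<Longrightarrow> set (tgt G e) \<subseteq> V"
  obtains q u where "path_from_to G q u y" "u \<in> V" "hd q \<notin> E"
proof -
  have "\<exists>d\<in>set p. d \<notin> E" using assms(3) by blast
  then obtain xs e ys where split: "p = xs @ e # ys" and "e \<notin> E" and "\<forall>d\<in>set xs. \<not> d \<notin> E"
    by (rule split_list_first_propE)
  show thesis
  proof (cases "xs = []")
    case True
    show thesis
      by (rule that[of "e # ys" x]) (use p split True \<open>x \<in> V\<close> \<open>e \<notin> E\<close> in auto)
  next
    case False
    obtain u where "path_from_to G xs x u" "path_from_to G (e # ys) u y"
      using path_from_to_appendE[of G xs "e # ys" x y] p[unfolded split] False by blast
    moreover have "u \<in> V"
      using calculation(1) closed last_in_set[OF False] \<open>\<forall>d\<in>set xs. \<not> d \<notin> E\<close>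
      by (fastforce simp: path_from_to_def)
    ultimately show thesis using that \<open>e \<notin> E\<close> by auto
  qed
qed

lemma path_from_to_last_exit:
  assumes p: "path_from_to G p x y" and "y \<in> V" "hd p \<notin> E"
    and closed: "\<And>e. e \<in> E \<Longrightarrow> set (src G e) \<subseteq> V"
  obtains q u where "path_from_to G q x u" "u \<in> V" "hd q \<notin> E" "last q \<notin> E"
proof -
  have "p \<noteq> []" using p by (simp add: path_from_to_def is_path_def)
  then have "\<exists>d\<in>set p. d \<notin> E" using assms(3) hd_in_set by blast
  then obtain as f bs where split: "p = as @ f # bs" and "f \<notin> E" and "\<forall>d\<in>set bs. \<not> d \<notin> E"
    by (rule split_list_last_propE)
  have hd_eq: "hd (as @ [f]) = hd p" using split by (cases as) auto
  show thesis
  proof (cases "bs = []")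
    case True
    show thesis
      by (rule that[of p y]) (use p split True \<open>y \<in> V\<close> \<open>f \<notin> E\<close> assms(3) in auto)
  next
    case False
    obtain u where "path_from_to G (as @ [f]) x u" "path_from_to G bs u y"
      using path_from_to_appendE[of G "as @ [f]" bs x y] p[unfolded split] False by auto
    moreover have "u \<in> V"
      using calculation(2) closed hd_in_set[OF False] \<open>\<forall>d\<in>set bs. \<not> d \<notin> E\<close>
      by (fastforce simp: path_from_to_def)
    ultimately show thesis using that hd_eq assms(3) \<open>f \<notin> E\<close> by auto
  qed
qed

lemma finite_incidences:
  "finite E \<Longrightarrow> finite {(e, i). e \<in> E \<and> i < length (f e) \<and> f e ! i = v}"
  by (rule finite_subset[of _ "SIGMA e:E. {..<length (f e)}"]) auto

lemma card_incidences_eq_0_iff: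
  assumes "finite E"
  shows "card {(e, i). e \<in> E \<and> i < length (f e) \<and> f e ! i = v} = 0 \<longleftrightarrow> (\<forall>e\<in>E. v \<notin> set (f e))"
  using finite_incidences[OF assms, of f v] by (auto simp: in_set_conv_nth)

lemma card_incidences_le_1_unique:
  assumes "finite E" "card {(e, i). e \<in> E \<and> i < length (f e) \<and> f e ! i = v} \<le> 1"
    and "e \<in> E" "e' \<in> E" "v \<in> set (f e)" "v \<in> set (f e')"
  shows "e = e'"
proof -
  obtain i j where "i < length (f e)" "f e ! i = v" "j < length (f e')" "f e' ! j = v"
    using assms(5,6) by (metis in_set_conv_nth)
  then have "(e, i) = (e', j)"
    using assms(2-4) card_le_Suc0_iff_eq[OF finite_incidences[OF assms(1), of f v]] by auto
  then show ?thesis by simp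
qed

lemma inputs_iff:
  "finite (edges G) \<Longrightarrow> v \<in> inputs G \<longleftrightarrow> v \<in> nodes G \<and> (\<forall>e\<in>edges G. v \<notin> set (tgt G e))"
  by (simp add: inputs_def indeg_def card_incidences_eq_0_iff)

lemma outputs_iff:
  "finite (edges G) \<Longrightarrow> v \<in> outputs G \<longleftrightarrow> v \<in> nodes G \<and> (\<forall>e\<in>edges G. v \<notin> set (src G e))"
  by (simp add: outputs_def outdeg_def card_incidences_eq_0_iff)

lemma ma_tgt_unique:
  assumes "ma G" "finite (edges G)" "v \<in> nodes G" "e \<in> edges G" "e' \<in> edges G"
    "v \<in> set (tgt G e)" "v \<in> set (tgt G e')"
  shows "e = e'"
  using assms card_incidences_le_1_unique[of "edges G" "tgt G" v e e']
  by (simp add: ma_def indeg_def)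

lemma ma_src_unique:
  assumes "ma G" "finite (edges G)" "v \<in> nodes G" "e \<in> edges G" "e' \<in> edges G"
    "v \<in> set (src G e)" "v \<in> set (src G e')"
  shows "e = e'"
  using assms card_incidences_le_1_unique[of "edges G" "src G" v e e']
  by (simp add: ma_def outdeg_def)

lemma hom_reflects_inputs:
  assumes "hom L G m" "finite (edges L)" "finite (edges G)" "x \<in> nodes L" "fst m x \<in> inputs G"
  shows "x \<in> inputs L"
  using assms by (fastforce simp: inputs_iff hom_def)

lemma hom_reflects_outputs:
  assumes "hom L G m" "finite (edges L)" "finite (edges G)" "x \<in> nodes L" "fst m x \<in> outputs G"
  shows "x \<in> outputs L"
  using assms by (fastforce simp: outputs_iff hom_def)

lemma output_if_source_of_outer_edge:
  assumes "ma G" "finite (edges G)" "finite (edges L)" "hom L G m" "w \<in> nodes L"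
    and "f \<in> edges G" "f \<notin> snd m ` edges L" "fst m w \<in> set (src G f)"
  shows "w \<in> outputs L"
proof -
  have "f = snd m e" if "e \<in> edges L" "w \<in> set (src L e)" for e
    using ma_src_unique[OF assms(1,2) _ assms(6) _ assms(8), of "snd m e"] that assms(4,5)
    by (auto simp: hom_def)
  then show ?thesis using assms(3,5,7) by (auto simp: outputs_iff)
qed

lemma input_if_target_of_outer_edge:
  assumes "ma G" "finite (edges G)" "finite (edges L)" "hom L G m" "w \<in> nodes L"
    and "f \<in> edges G" "f \<notin> snd m ` edges L" "fst m w \<in> set (tgt G f)"
  shows "w \<in> inputs L"
proof -
  have "f = snd m e" if "e \<in> edges L" "w \<in> set (tgt L e)" for e
    using ma_tgt_unique[OF assms(1,2) _ assms(6) _ assms(8), of "snd m e"] that assms(4,5)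
    by (auto simp: hom_def)
  then show ?thesis using assms(3,5,7) by (auto simp: inputs_iff)
qed

lemma mono_into_ma_convex_match:
  assumes maG: "ma G" and fin: "finite (edges G)" and wfL: "wf_hyp Sig L"
    and sc: "strongly_connected L" and mono: "mono L G m"
  shows "convex_match L G m"
  unfolding convex_match_def
proof (intro conjI ballI allI impI mono)
  let ?V = "fst m ` nodes L" and ?E = "snd m ` edges L"
  have hom: "hom L G m" using mono by (simp add: mono_def)
  have finL: "finite (edges L)" using wfL by (simp add: wf_hyp_def)
  have closed_src: "set (src G e) \<subseteq> ?V" and closed_tgt: "set (tgt G e) \<subseteq> ?V" if "e \<in> ?E" for e
    using that hom wfL unfolding hom_def wf_hyp_def by (fastforce intro: imageI)+
  fix x x' p
  assume "x \<in> ?V" "x' \<in> ?V" and p: "path_from_to G p x x'"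
  show "set p \<subseteq> ?E"
  proof (rule ccontr)
    assume "\<not> set p \<subseteq> ?E"
    obtain q0 u0 where "path_from_to G q0 u0 x'" "u0 \<in> ?V" "hd q0 \<notin> ?E"
      using path_from_to_first_exit[OF p \<open>x \<in> ?V\<close> \<open>\<not> set p \<subseteq> ?E\<close> closed_tgt] by blast
    then obtain q u where q: "path_from_to G q u0 u" "u \<in> ?V" "hd q \<notin> ?E" "last q \<notin> ?E"
      using path_from_to_last_exit[OF _ \<open>x' \<in> ?V\<close> _ closed_src] by blast
    obtain w w' where w: "w \<in> nodes L" "u0 = fst m w" and w': "w' \<in> nodes L" "u = fst m w'"
      using \<open>u0 \<in> ?V\<close> \<open>u \<in> ?V\<close> by blast
    have "hd q \<in> edges G" "last q \<in> edges G"
      using q(1) by (auto simp: path_from_to_def is_path_def)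
    then have "w \<in> outputs L" "w' \<in> inputs L"
      using output_if_source_of_outer_edge[OF maG fin finL hom w(1)]
        input_if_target_of_outer_edge[OF maG fin finL hom w'(1)] q w w'
      by (auto simp: path_from_to_def)
    then obtain r where "path_from_to L r w' w"
      using sc by (auto simp: strongly_connected_def)
    then have "path_from_to G (map (snd m) r @ q) u u"
      using path_from_to_append path_from_to_hom[OF hom] q(1) w w' by metis
    then show False using ma_no_closed_path[OF maG] by blast
  qed
qed

lemma hom_mcomp: "hom A B f \<Longrightarrow> hom B C g \<Longrightarrow> hom A C (mcomp f g)"
  by (simp add: hom_def mcomp_def)

lemma ma_hom_separates_inputs_outputs:
  assumes "hom L G h" "ma G" "strongly_connected L" "x \<in> inputs L" "y \<in> outputs L"
  shows "fst h x \<noteq> fst h y"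
proof
  assume eq: "fst h x = fst h y"
  obtain p where "path_from_to L p x y"
    using assms(3-5) by (auto simp: strongly_connected_def)
  then have "path_from_to G (map (snd h) p) (fst h x) (fst h x)"
    using path_from_to_hom[OF assms(1)] eq by metis
  then show False using ma_no_closed_path[OF assms(2)] by blast
qed

lemma rtrancl_disjoint_pairs:
  assumes disj: "\<forall>p\<in>N. \<forall>p'\<in>N. p \<noteq> p' \<longrightarrow> {fst p, snd p} \<inter> {fst p', snd p'} = {}"
    and "(x, y) \<in> (N \<union> N\<inverse>)\<^sup>*"
  shows "x = y \<or> (x, y) \<in> N \<or> (y, x) \<in> N"
  using assms(2) by (induction rule: rtrancl_induct) (use disj in fastforce)+

lemma hyp_coeq_disc_inj_edges:
  "hyp_coeq (disc N) S S' (fst, id) (snd, id) q \<Longrightarrow> inj_on (snd q) (edges S)"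
  by (simp add: hyp_coeq_def set_coeq_def disc_def inj_on_def)

lemma hyp_coeq_disc_node_kernel:
  assumes "hyp_coeq (disc N) S S' (fst, id) (snd, id) q"
    and "\<forall>p\<in>N. \<forall>p'\<in>N. p \<noteq> p' \<longrightarrow> {fst p, snd p} \<inter> {fst p', snd p'} = {}"
    and "x \<in> nodes S" "y \<in> nodes S" "fst q x = fst q y"
  shows "x = y \<or> (x, y) \<in> N \<or> (y, x) \<in> N"
proof -
  have "{(fst p, snd p) | p. p \<in> N} = N" by auto
  then have "(x, y) \<in> (N \<union> N\<inverse>)\<^sup>*"
    using assms(1,3-5) by (simp add: hyp_coeq_def set_coeq_def disc_def)
  then show ?thesis using rtrancl_disjoint_pairs[OF assms(2)] by blast
qed

lemma mono_mcomp_node_gluing: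
  assumes coeq: "hyp_coeq (disc N) S S' (fst, id) (snd, id) q"
    and N: "N \<subseteq> inputs S \<times> outputs S"
    and disj: "\<forall>p\<in>N. \<forall>p'\<in>N. p \<noteq> p' \<longrightarrow> {fst p, snd p} \<inter> {fst p', snd p'} = {}"
    and finS: "finite (edges S)" and maS': "ma S'"
    and finL: "finite (edges L)" and sc: "strongly_connected L" and mono: "mono L S m"
  shows "mono L S' (mcomp m q)"
proof -
  have hom: "hom L S m" using mono by (simp add: mono_def)
  have "hom S S' q" using coeq by (simp add: hyp_coeq_def)
  with hom have hom': "hom L S' (mcomp m q)" by (rule hom_mcomp)
  have not_glued: "(fst m x, fst m y) \<notin> N" if "x \<in> nodes L" "y \<in> nodes L"
    and "fst (mcomp m q) x = fst (mcomp m q) y" for x y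
  proof
    assume "(fst m x, fst m y) \<in> N"
    then have "x \<in> inputs L" "y \<in> outputs L"
      using N that(1,2) hom_reflects_inputs[OF hom finL finS] hom_reflects_outputs[OF hom finL finS]
      by auto
    then show False using ma_hom_separates_inputs_outputs[OF hom' maS' sc] that(3) by blast
  qed
  have "inj_on (fst (mcomp m q)) (nodes L)"
  proof (rule inj_onI)
    fix x y assume x: "x \<in> nodes L" and y: "y \<in> nodes L"
      and eq: "fst (mcomp m q) x = fst (mcomp m q) y"
    have "fst m x \<in> nodes S" "fst m y \<in> nodes S" using hom x y by (auto simp: hom_def)
    then have "fst m x = fst m y"
      using hyp_coeq_disc_node_kernel[OF coeq disj] eq not_glued[OF x y eq] not_glued[OF y x eq[symmetric]]
      by (auto simp: mcomp_def)
    then show "x = y" using mono x y by (auto simp: mono_def dest: inj_onD)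
  qed
  moreover have "inj_on (snd (mcomp m q)) (edges L)"
    using mono hyp_coeq_disc_inj_edges[OF coeq]
    by (auto simp: mono_def hom_def mcomp_def intro: comp_inj_on inj_on_subset)
  ultimately show ?thesis using hom' by (simp add: mono_def)
qed

theorem mainTheorem9:
  fixes Sig :: "('l \<times> nat \<times> nat) set"
    and Rs :: "('v,'e,'l,'k) rule set"
    and ri rj :: "('v,'e,'l,'k) rule"
    and M :: "('e \<times> 'e) set"
    and S :: "('a,'f,'l) hyp"
    and e1 e2 :: "('v,'e,'a,'f) morph"
    and N :: "('a \<times> 'a) set"
    and S' :: "('b,'g,'l) hyp"
    and eps' :: "('a,'f,'b,'g) morph"
  assumes "left_connected_system Sig Rs"
    and "ri \<in> Rs" and "rj \<in> Rs"
    and "hyperedge_gluing_set (lhs ri) (lhs rj) M"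
    and "wf_hyp Sig S"
    and "hyp_pushout (gamma (lhs ri) (lhs rj) M) (lhs ri) (lhs rj) S (fst, fst) (snd, snd) e1 e2"
    and "node_gluing_set S (lhs ri) (lhs rj) e1 e2 N"
    and "wf_hyp Sig S'"
    and "hyp_coeq (disc N) S S' (fst, id) (snd, id) eps'"
    and "yields_critical_pair Sig ri rj S' (mcomp e1 eps') (mcomp e2 eps')"
  shows "\<forall>r\<in>Rs. \<forall>m. convex_match (lhs r) S m \<longrightarrow> convex_match (lhs r) S' (mcomp m eps')"
proof (intro ballI allI impI)
  fix r m
  assume "r \<in> Rs" and match: "convex_match (lhs r) S m"
  then have wfL: "wf_hyp Sig (lhs r)" and sc: "strongly_connected (lhs r)"
    using assms(1) by (auto simp: left_connected_system_def left_connected_rule_def)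
  have maS': "ma S'"
    using assms(10) by (simp add: yields_critical_pair_def ma_cospan_def)
  have N: "N \<subseteq> inputs S \<times> outputs S"
    and disj: "\<forall>p\<in>N. \<forall>p'\<in>N. p \<noteq> p' \<longrightarrow> {fst p, snd p} \<inter> {fst p', snd p'} = {}"
    using assms(7) by (auto simp: node_gluing_set_def Let_def)
  have "mono (lhs r) S' (mcomp m eps')"
    using mono_mcomp_node_gluing[OF assms(9) N disj _ maS' _ sc] match assms(5) wfL
    by (simp add: convex_match_def wf_hyp_def)
  then show "convex_match (lhs r) S' (mcomp m eps')"
    using mono_into_ma_convex_match[OF maS' _ wfL sc] assms(8) by (simp add: wf_hyp_def)
qed

end
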